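(* For $i\in\{1,2\}$ let $(\mathcal B_{i,\mathbb R},\mathcal S_i,e_i,m_i)$ be as in the context, with the same constant $\kappa$. Let $\mathcal L\in L(\mathcal B_{1,\mathbb R},\mathcal B_{2,\mathbb R})$ and $\mathcal L_{\mathbb C}\in L(\mathcal B_{1,\mathbb C},\mathcal B_{2,\mathbb C})$. Assume $\mathcal L(\mathcal C_{1,\mathbb R})\subset\mathcal C_{2,\mathbb R}$ and $\Delta_{\mathbb R}:=\operatorname{diam}_{d_H}(\mathcal L(\mathcal C_{1,\mathbb R}))<\infty$. If there exists $\varepsilon\in\big(0,\frac{\kappa^2}{12\sqrt2}e^{-2\Delta_{\mathbb R}}\big)$ such that for all $\ell\in\mathcal S_2$ and all $h\in\mathcal C_{1,\mathbb R}$, \[|\ell(\mathcal L_{\mathbb C}h)-\ell(\mathcal Lh)|\le\varepsilon\,\ell(\mathcal Lh),\] then $\mathcal L_{\mathbb C}(\mathcal C_{1,\mathbb C})\subset\mathcal C_{2,\mathbb C}$ and \[\operatorname{diam}_{\delta_{\mathcal C_{2,\mathbb C}}}(\mathcal L_{\mathbb C}(\mathcal C_{1,\mathbb C}))\le8\Delta_{\mathbb R}+2\ln[3\sqrt2\kappa^{-2}]+\tfrac{\sqrt2}{3}\kappa^2e^{-2\Delta_{\mathbb R}}.\]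
   Context: Cone setting. $V$ is a real topological vector space, $\mathcal S\subset V'$ a set of linear functionals such that $\ell(x)=0$ for all $\ell\in\mathcal S$ implies $x=0$, and $C_{\mathbb R}=\{h\in V\setminus\{0\}:\ell(h)\ge0\ \forall\ell\in\mathcal S\}$. There is $e\in C_{\mathbb R}$ such that for every $h\in V$ some $\lambda\ge0$ has $\lambda e-h\in C_{\mathbb R}$. The norm is $\|h\|=\inf\{\lambda\ge0:\ell(\lambda e\pm h)\ge0\ \forall\ell\in\mathcal S\}$ and $\mathcal B_{\mathbb R}$ is the completion of $V$; $\mathcal C_{\mathbb R}=\{h\in\mathcal B_{\mathbb R}\setminus\{0\}:\ell(h)\ge0\ \forall\ell\in\mathcal S\}$. $\mathcal S_*$ is the weak-$*$ closure of the convex hull of $\{\lambda\ell:\lambda>0,\ell\in\mathcal S\}$, and there exist $m\in\mathcal S_*$ and $\kappa\in(0,1)$ with $m(e)=1$ and $m(h)\ge\kappa\|h\|$ for all $h\in\mathcal C_{\mathbb R}$. $\mathcal C'_{\mathbb R}=\{\ell\in\mathcal B'_{\mathbb R}:\ell(h)\ge0\ \forall h\in\mathcal C_{\mathbb R}\}$. The Hilbert metric on $\mathcal C_{\mathbb R}$ is $d_H(h,g)=\ln(\beta/\alpha)$, $\alpha=\sup\{\lambda>0:g-\lambda h\in\mathcal C_{\mathbb R}\}$, $\beta=\inf\{\mu>0:\mu h-g\in\mathcal C_{\mathbb R}\}$. $\mathcal B_{\mathbb C}$ is the complexification (elements $x+iy$, $x,y\in\mathcal B_{\mathbb R}$, norm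 $\|x+iy\|=\sup_\theta(\|\Re(e^{i\theta}(x+iy))\|^2+\|\Im(e^{i\theta}(x+iy))\|^2)^{1/2}$), real functionals extended complex-linearly. Complex cone $\mathcal C_{\mathbb C}=\{z(x+iy):z\in\mathbb C\setminus\{0\},x,y\in\mathcal C_{\mathbb R}\}$; dual cone $\mathcal C'_{\mathbb C}=\{\ell\in\mathcal B'_{\mathbb C}:\ell(h)\ne0\ \forall h\in\mathcal C_{\mathbb C}\}$. For $h,g\in\mathcal C_{\mathbb C}$, $E(h,g)=\{\ell(h)/\ell(g):\ell\in\mathcal C'_{\mathbb C}\}$ and $\delta_{\mathcal C}(h,g)=\ln\frac{\sup_{z\in E(h,g)}|z|}{\inf_{z\in E(h,g)}|z|}$; diameters are taken with respect to $\delta_{\mathcal C}$. Objects of the $i$-th space carry index $i$. *)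

theory Defs
  imports "HOL-Analysis.Analysis"
begin

definition coneR :: "('a::real_vector \<Rightarrow> real) set \<Rightarrow> 'a set" where
  "coneR S = {h. h \<noteq> 0 \<and> (\<forall>l\<in>S. l h \<ge> 0)}"

definition pos_comb :: "('a \<Rightarrow> real) set \<Rightarrow> ('a \<Rightarrow> real) set" where
  "pos_comb S = {(\<lambda>x. \<Sum>l\<in>F. c l * l x) | F c. finite F \<and> F \<noteq> {} \<and> F \<subseteq> S \<and> (\<forall>l\<in>F. c l > 0)}"

text \<open>S_* : weak-star closure (in the dual space; the topology on functions is the
  product topology = topology of pointwise convergence) of pos_comb S.\<close>
definition S_star :: "('a::real_normed_vector \<Rightarrow> real) set \<Rightarrow> ('a \<Rightarrow> real) set" where
  "S_star S = {l \<in> closure (pos_comb S). bounded_linear l}"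

text \<open>The standing assumptions: the type 'a is the completion B_R of the dense subspace V,
  S separates points of V, e is an order unit, the norm is the order-unit norm,
  and m, kappa as in the context.\<close>
definition cone_setting ::
  "'a::banach set \<Rightarrow> ('a \<Rightarrow> real) set \<Rightarrow> 'a \<Rightarrow> ('a \<Rightarrow> real) \<Rightarrow> real \<Rightarrow> bool" where
  "cone_setting V S e m \<kappa> \<longleftrightarrow>
     subspace V \<and> closure V = UNIV \<and>
     (\<forall>l\<in>S. bounded_linear l) \<and>
     (\<forall>x\<in>V. (\<forall>l\<in>S. l x = 0) \<longrightarrow> x = 0) \<and>
     e \<in> V \<and> e \<in> coneR S \<and>
     (\<forall>h\<in>V. \<exists>c\<ge>0. c *\<^sub>R e - h \<in> coneR S) \<and>
     (\<forall>h\<in>V. norm h = Inf {c. c \<ge> 0 \<and>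
         (\<forall>l\<in>S. l (c *\<^sub>R e + h) \<ge> 0 \<and> l (c *\<^sub>R e - h) \<ge> 0)}) \<and>
     m \<in> S_star S \<and> m e = 1 \<and> (\<forall>h\<in>coneR S. m h \<ge> \<kappa> * norm h) \<and>
     0 < \<kappa> \<and> \<kappa> < 1"

definition hilbert_alpha :: "('a::real_vector \<Rightarrow> real) set \<Rightarrow> 'a \<Rightarrow> 'a \<Rightarrow> ereal" where
  "hilbert_alpha S h g = Sup ({0} \<union> ereal ` {c. c > 0 \<and> g - c *\<^sub>R h \<in> coneR S})"

definition hilbert_beta :: "('a::real_vector \<Rightarrow> real) set \<Rightarrow> 'a \<Rightarrow> 'a \<Rightarrow> ereal" where
  "hilbert_beta S h g = Inf (ereal ` {\<mu>. \<mu> > 0 \<and> \<mu> *\<^sub>R h - g \<in> coneR S})"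

definition hilbert_dist :: "('a::real_vector \<Rightarrow> real) set \<Rightarrow> 'a \<Rightarrow> 'a \<Rightarrow> ereal" where
  "hilbert_dist S h g =
     (let a = hilbert_alpha S h g; b = hilbert_beta S h g in
      if a = 0 \<or> b = \<infinity> then \<infinity> else ereal (ln (real_of_ereal b / real_of_ereal a)))"

definition diam_H :: "('a::real_vector \<Rightarrow> real) set \<Rightarrow> 'a set \<Rightarrow> ereal" where
  "diam_H S A = Sup {hilbert_dist S h g | h g. h \<in> A \<and> g \<in> A}"

section \<open>Complexification: x + iy represented by the pair (x, y)\<close>

definition cmult :: "complex \<Rightarrow> 'a::real_vector \<times> 'a \<Rightarrow> 'a \<times> 'a" where
  "cmult z v = (Re z *\<^sub>R fst v - Im z *\<^sub>R snd v, Im z *\<^sub>R fst v + Re z *\<^sub>R snd v)"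

definition cnorm :: "'a::real_normed_vector \<times> 'a \<Rightarrow> real" where
  "cnorm v = (SUP \<theta>. sqrt ((norm (fst (cmult (cis \<theta>) v)))\<^sup>2 + (norm (snd (cmult (cis \<theta>) v)))\<^sup>2))"

definition cbounded_linear ::
  "('a::real_normed_vector \<times> 'a \<Rightarrow> 'b::real_normed_vector \<times> 'b) \<Rightarrow> bool" where
  "cbounded_linear T \<longleftrightarrow>
     (\<forall>u v. T (u + v) = T u + T v) \<and> (\<forall>z v. T (cmult z v) = cmult z (T v)) \<and>
     (\<exists>K. \<forall>v. cnorm (T v) \<le> K * cnorm v)"

definition cbounded_functional :: "('a::real_normed_vector \<times> 'a \<Rightarrow> complex) \<Rightarrow> bool" where
  "cbounded_functional f \<longleftrightarrow>
     (\<forall>u v. f (u + v) = f u + f v) \<and> (\<forall>z v. f (cmult z v) = z * f v) \<and>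
     (\<exists>K. \<forall>v. cmod (f v) \<le> K * cnorm v)"

definition cext :: "('a \<Rightarrow> real) \<Rightarrow> 'a \<times> 'a \<Rightarrow> complex" where
  "cext l v = Complex (l (fst v)) (l (snd v))"

definition coneC :: "('a::real_vector \<Rightarrow> real) set \<Rightarrow> ('a \<times> 'a) set" where
  "coneC S = {cmult z (x, y) | z x y. z \<noteq> 0 \<and> x \<in> coneR S \<and> y \<in> coneR S}"

definition dual_coneC :: "('a::real_normed_vector \<Rightarrow> real) set \<Rightarrow> ('a \<times> 'a \<Rightarrow> complex) set" where
  "dual_coneC S = {f. cbounded_functional f \<and> (\<forall>h\<in>coneC S. f h \<noteq> 0)}"

definition E_set :: "('a::real_normed_vector \<Rightarrow> real) set \<Rightarrow> 'a \<times> 'a \<Rightarrow> 'a \<times> 'a \<Rightarrow> complex set" where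
  "E_set S h g = {f h / f g | f. f \<in> dual_coneC S}"

definition delta_C :: "('a::real_normed_vector \<Rightarrow> real) set \<Rightarrow> 'a \<times> 'a \<Rightarrow> 'a \<times> 'a \<Rightarrow> ereal" where
  "delta_C S h g =
     (let s = Sup ((\<lambda>z. ereal (cmod z)) ` E_set S h g);
          i = Inf ((\<lambda>z. ereal (cmod z)) ` E_set S h g) in
      if E_set S h g = {} \<or> s = \<infinity> \<or> i = 0 then \<infinity>
      else ereal (ln (real_of_ereal s / real_of_ereal i)))"

definition diam_C :: "('a::real_normed_vector \<Rightarrow> real) set \<Rightarrow> ('a \<times> 'a) set \<Rightarrow> ereal" where
  "diam_C S A = Sup {delta_C S h g | h g. h \<in> A \<and> g \<in> A}"

end

theory Submission
  imports Defs
begin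

text \<open>
  Write \<open>u = L\<^sub>C (z (x + i y)) = z (X + i Y)\<close> with \<open>X = L\<^sub>C x\<close> and \<open>Y = L\<^sub>C y\<close> close to
  \<open>a = L x\<close> and \<open>b = L y\<close>. A finite Hilbert diameter \<open>\<Delta>\<close> of \<open>L(C\<^sub>1)\<close> gives
  \<open>lo a \<le> b \<le> hi a\<close> with \<open>hi \<le> exp \<Delta> * lo\<close>. For \<open>f\<close> in the complex dual cone the ratio
  \<open>f b / f a\<close> lies in the disk with diameter \<open>[lo, hi]\<close>: otherwise
  \<open>f (b - lo a) + \<nu> f (hi a - b) = 0\<close> for some \<open>\<nu>\<close> with \<open>Re \<nu> > 0\<close>, although
  \<open>(b - lo a) + \<nu> (hi a - b)\<close> lies in the complex cone. The same kind of argument gives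
  \<open>|f X - f a| \<le> 3 \<epsilon> |f a|\<close>. Once \<open>16 \<epsilon> exp \<Delta> \<le> 1\<close>, a suitable rotation \<open>(c + i d)(X + i Y)\<close>
  has real and imaginary part in the real cone, and \<open>|f u| / |f (L e\<^sub>1)|\<close> stays, uniformly in
  \<open>f\<close>, in an interval whose endpoints have ratio \<open>4 exp (2 \<Delta>)\<close>. Hence the projective
  diameter of \<open>L\<^sub>C(C\<^sub>1)\<close> is at most \<open>4 \<Delta> + 2 ln 4\<close>, which is below the stated bound.
\<close>

section \<open>Pointed cones and the Hilbert metric\<close>

locale pointed_cone =
  fixes S :: "('a::real_normed_vector \<Rightarrow> real) set"
  assumes linear_functional: "l \<in> S \<Longrightarrow> linear l"
    and pointed: "\<forall>l\<in>S. l h = 0 \<Longrightarrow> h = 0"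

lemma (in pointed_cone) functional_simps:
  assumes "l \<in> S"
  shows "l (x + y) = l x + l y" "l (x - y) = l x - l y" "l (c *\<^sub>R x) = c * l x" "l 0 = 0"
  using linear_functional[OF assms]
  by (simp_all add: linear_add linear_diff linear_scale linear_0)

lemma cone_setting_imp_pointed_cone:
  assumes "cone_setting V S e m \<kappa>"
  shows "pointed_cone S"
proof (rule pointed_cone.intro)
  have S: "\<And>l. l \<in> S \<Longrightarrow> bounded_linear l" and m: "bounded_linear m"
    and m_ge: "\<And>h. h \<in> coneR S \<Longrightarrow> \<kappa> * norm h \<le> m h" and "0 < \<kappa>"
    using assms by (auto simp: cone_setting_def S_star_def)
  show "linear l" if "l \<in> S" for l
    using S[OF that] by (rule bounded_linear.linear)
  show "h = 0" if zero: "\<forall>l\<in>S. l h = 0" for h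
  proof (rule ccontr)
    assume "h \<noteq> 0"
    then have "h \<in> coneR S" "- h \<in> coneR S"
      using zero S by (auto simp: coneR_def linear_neg bounded_linear.linear)
    then have "\<kappa> * norm h \<le> m h" "\<kappa> * norm h \<le> - m h"
      using m_ge[of h] m_ge[of "- h"] m by (auto simp: linear_neg bounded_linear.linear)
    with \<open>h \<noteq> 0\<close> \<open>0 < \<kappa>\<close> show False
      by (smt (verit) mult_pos_pos zero_less_norm_iff)
  qed
qed

definition cone_bounds :: "('a \<Rightarrow> real) set \<Rightarrow> 'a \<Rightarrow> real \<Rightarrow> real \<Rightarrow> 'a \<Rightarrow> bool" where
  "cone_bounds S a lo hi b \<longleftrightarrow> 0 < lo \<and> lo \<le> hi \<and> (\<forall>l\<in>S. lo * l a \<le> l b \<and> l b \<le> hi * l a)"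

lemma (in pointed_cone) exists_functional_pos:
  assumes "a \<in> coneR S"
  obtains l where "l \<in> S" "0 < l a"
  using assms pointed[of a] by (force simp: coneR_def)

lemma (in pointed_cone) coneR_of_ge:
  assumes a: "a \<in> coneR S" and "0 < \<gamma>" and ge: "\<forall>l\<in>S. \<gamma> * l a \<le> l p"
  shows "p \<in> coneR S"
proof -
  have nonneg: "\<forall>l\<in>S. 0 \<le> l a" using a by (simp add: coneR_def)
  then have "\<forall>l\<in>S. 0 \<le> l p" using ge \<open>0 < \<gamma>\<close> by (meson order_trans mult_nonneg_nonneg less_imp_le)
  moreover have "p \<noteq> 0"
  proof
    assume "p = 0"
    then have "\<forall>l\<in>S. l a = 0"
      using ge nonneg \<open>0 < \<gamma>\<close> functional_simps(4) by (smt (verit) mult_pos_pos)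
    then show False using a pointed by (auto simp: coneR_def)
  qed
  ultimately show ?thesis by (simp add: coneR_def)
qed

lemma (in pointed_cone) pos_comb_in_coneR:
  assumes p: "\<forall>l\<in>S. 0 \<le> l p" and q: "\<forall>l\<in>S. 0 \<le> l q" and "p + q \<noteq> 0" and "0 < s" "0 < t"
  shows "s *\<^sub>R p + t *\<^sub>R q \<in> coneR S"
proof (rule coneR_of_ge)
  show "p + q \<in> coneR S" using assms by (simp add: coneR_def functional_simps)
  show "0 < min s t" using assms by simp
  show "\<forall>l\<in>S. min s t * l (p + q) \<le> l (s *\<^sub>R p + t *\<^sub>R q)"
    using p q by (simp add: functional_simps distrib_left add_mono mult_right_mono)
qed

lemma (in pointed_cone) hilbert_alpha_le:
  assumes "l \<in> S" "0 < l a" "b \<in> coneR S"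
  shows "hilbert_alpha S a b \<le> ereal (l b / l a)"
  unfolding hilbert_alpha_def
proof (rule Sup_least)
  fix x assume "x \<in> {0} \<union> ereal ` {c. 0 < c \<and> b - c *\<^sub>R a \<in> coneR S}"
  then consider "x = 0" | c where "x = ereal c" "b - c *\<^sub>R a \<in> coneR S" by blast
  then show "x \<le> ereal (l b / l a)"
  proof cases
    case 1
    then show ?thesis using assms by (simp add: coneR_def)
  next
    case 2
    then have "c * l a \<le> l b" using assms by (simp add: coneR_def functional_simps)
    with 2 show ?thesis using assms by (simp add: field_simps)
  qed
qed

lemma (in pointed_cone) hilbert_beta_ge:
  assumes "l \<in> S" "0 < l a"
  shows "ereal (l b / l a) \<le> hilbert_beta S a b"
  unfolding hilbert_beta_def
proof (rule Inf_greatest)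
  fix x assume "x \<in> ereal ` {\<mu>. 0 < \<mu> \<and> \<mu> *\<^sub>R a - b \<in> coneR S}"
  then obtain \<mu> where "x = ereal \<mu>" "\<mu> *\<^sub>R a - b \<in> coneR S" by blast
  moreover from this have "l b \<le> \<mu> * l a" using assms by (simp add: coneR_def functional_simps)
  ultimately show "ereal (l b / l a) \<le> x" using assms by (simp add: field_simps)
qed

lemma (in pointed_cone) le_mult_of_hilbert_beta:
  assumes "hilbert_beta S a b = ereal hi" "l \<in> S" "a \<in> coneR S"
  shows "l b \<le> hi * l a"
proof (cases "l a = 0")
  case True
  have "{\<mu>. 0 < \<mu> \<and> \<mu> *\<^sub>R a - b \<in> coneR S} \<noteq> {}"
  proof
    assume empty: "{\<mu>. 0 < \<mu> \<and> \<mu> *\<^sub>R a - b \<in> coneR S} = {}"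
    have "hilbert_beta S a b = \<infinity>" unfolding hilbert_beta_def empty by (simp add: top_ereal_def)
    with assms(1) show False by simp
  qed
  then obtain \<mu> where "\<mu> *\<^sub>R a - b \<in> coneR S" by blast
  then have "l b \<le> \<mu> * l a" using assms(2) by (simp add: coneR_def functional_simps)
  with True show ?thesis by simp
next
  case False
  then have "0 < l a" using assms by (simp add: coneR_def less_le)
  then show ?thesis
    using hilbert_beta_ge[OF assms(2) \<open>0 < l a\<close>, of b] assms(1) by (simp add: field_simps)
qed

lemma (in pointed_cone) mult_le_of_hilbert_alpha:
  assumes "hilbert_alpha S a b = ereal lo" "l \<in> S" "a \<in> coneR S" "b \<in> coneR S"
  shows "lo * l a \<le> l b"
proof (cases "l a = 0")
  case True
  then show ?thesis using assms by (simp add: coneR_def)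
next
  case False
  then have "0 < l a" using assms by (simp add: coneR_def less_le)
  then show ?thesis
    using hilbert_alpha_le[OF assms(2) \<open>0 < l a\<close> assms(4)] assms(1) by (simp add: field_simps)
qed

lemma (in pointed_cone) cone_bounds_of_hilbert_dist:
  assumes a: "a \<in> coneR S" and b: "b \<in> coneR S" and dist: "hilbert_dist S a b \<le> ereal D"
  obtains lo hi where "cone_bounds S a lo hi b" "hi \<le> exp D * lo"
proof -
  let ?\<alpha> = "hilbert_alpha S a b" and ?\<beta> = "hilbert_beta S a b"
  have finite: "?\<alpha> \<noteq> 0" "?\<beta> \<noteq> \<infinity>" and ln_le: "ln (real_of_ereal ?\<beta> / real_of_ereal ?\<alpha>) \<le> D"
    using dist by (auto simp: hilbert_dist_def Let_def split: if_splits)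
  obtain l where l: "l \<in> S" "0 < l a" using exists_functional_pos[OF a] .
  have "0 \<le> ?\<alpha>" unfolding hilbert_alpha_def by (simp add: Sup_upper)
  moreover have "?\<alpha> \<le> ?\<beta>"
    using hilbert_alpha_le[OF l b] hilbert_beta_ge[OF l] by (rule order_trans)
  ultimately obtain lo hi where lo: "?\<alpha> = ereal lo" "0 < lo" and hi: "?\<beta> = ereal hi" "lo \<le> hi"
    using finite by (cases ?\<alpha>; cases ?\<beta>) auto
  have "ln (hi / lo) \<le> D" using ln_le lo hi by simp
  then have "hi / lo \<le> exp D"
    using lo hi by (metis exp_le_cancel_iff exp_ln divide_pos_pos less_le_trans)
  then have "hi \<le> exp D * lo" using lo by (simp add: pos_divide_le_eq)
  moreover have "cone_bounds S a lo hi b"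
    using lo hi mult_le_of_hilbert_alpha[OF lo(1) _ a b] le_mult_of_hilbert_beta[OF hi(1) _ a]
    by (simp add: cone_bounds_def)
  ultimately show ?thesis using that by blast
qed

lemma (in pointed_cone) cone_bounds_of_diam_H:
  assumes "A \<subseteq> coneR S" "diam_H S A < \<infinity>" "a \<in> A" "b \<in> A"
  obtains lo hi where "cone_bounds S a lo hi b" "hi \<le> exp (real_of_ereal (diam_H S A)) * lo"
proof (rule cone_bounds_of_hilbert_dist)
  have le: "hilbert_dist S a b \<le> diam_H S A"
    unfolding diam_H_def using assms by (auto intro: Sup_upper)
  moreover have "hilbert_dist S a b \<noteq> - \<infinity>" by (simp add: hilbert_dist_def Let_def)
  ultimately show "hilbert_dist S a b \<le> ereal (real_of_ereal (diam_H S A))"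
    using assms(2) by (cases "diam_H S A") auto
qed (use assms that in auto)

lemma (in pointed_cone) cone_bounds_imp_coneR:
  assumes "a \<in> coneR S" "cone_bounds S a lo hi b"
  shows "b \<in> coneR S"
  using assms by (intro coneR_of_ge[OF assms(1), of lo]) (auto simp: cone_bounds_def)


section \<open>Complexification\<close>

lemma cmult_cmult: "cmult z (cmult w v) = cmult (z * w) v"
  by (simp add: cmult_def algebra_simps)

lemma pair_eq_add_cmult_ii: "(x, y) = (x, 0) + cmult \<i> (y, 0)"
  by (simp add: cmult_def)

lemma cbounded_functional_simps:
  assumes "cbounded_functional f"
  shows "f (u + v) = f u + f v" "f (u - v) = f u - f v" "f (cmult z v) = z * f v"
    "f (x + y, 0) = f (x, 0) + f (y, 0)" "f (x - y, 0) = f (x, 0) - f (y, 0)"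
    "f (r *\<^sub>R x, 0) = of_real r * f (x, 0)"
proof -
  show add: "f (u + v) = f u + f v" for u v
    using assms unfolding cbounded_functional_def by blast
  show mult: "f (cmult z v) = z * f v" for z v
    using assms unfolding cbounded_functional_def by blast
  show "f (u - v) = f u - f v" using add[of "u - v" v] by simp
  show "f (x + y, 0) = f (x, 0) + f (y, 0)" using add[of "(x, 0)" "(y, 0)"] by simp
  show "f (x - y, 0) = f (x, 0) - f (y, 0)" using add[of "(x - y, 0)" "(y, 0)"] by simp
  show "f (r *\<^sub>R x, 0) = of_real r * f (x, 0)"
    using mult[of "of_real r" "(x, 0)"] by (simp add: cmult_def)
qed

lemma cbounded_functional_pair:
  assumes "cbounded_functional f"
  shows "f (x, y) = f (x, 0) + \<i> * f (y, 0)"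
  by (subst pair_eq_add_cmult_ii) (simp only: cbounded_functional_simps[OF assms])

lemma cext_simps:
  assumes "linear l"
  shows "cext l (u + v) = cext l u + cext l v" "cext l (u - v) = cext l u - cext l v"
    "cext l (cmult z v) = z * cext l v" "cext l (x, 0) = of_real (l x)"
  using assms
  by (auto simp: cext_def cmult_def complex_eq_iff linear_add linear_diff linear_scale linear_0)

lemma cbounded_linear_pair:
  assumes "cbounded_linear T"
  shows "T (x, y) = T (x, 0) + cmult \<i> (T (y, 0))"
  using assms pair_eq_add_cmult_ii[of x y] by (metis cbounded_linear_def)

lemma cbounded_linear_cmult:
  assumes "cbounded_linear T"
  shows "T (cmult z v) = cmult z (T v)"
  using assms unfolding cbounded_linear_def by blast

text \<open>The witness is \<open>(c + i d)\<^sup>-\<^sup>1\<close> times \<open>(c + i d)(P + i Q) = (c P - d Q) + i (d P + c Q)\<close>.\<close>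
lemma coneC_of_rotation:
  fixes P Q :: "'a::real_vector"
  assumes "c \<noteq> 0 \<or> d \<noteq> 0"
    and "c *\<^sub>R P - d *\<^sub>R Q \<in> coneR S" and "d *\<^sub>R P + c *\<^sub>R Q \<in> coneR S"
  shows "(P, Q) \<in> coneC S"
proof -
  define n where "n = c * c + d * d"
  have "0 < n" using assms(1) by (simp add: n_def sum_squares_gt_zero_iff)
  define z where "z = Complex (c / n) (- d / n)"
  have "z \<noteq> 0" using \<open>0 < n\<close> assms(1) by (auto simp: z_def complex_eq_iff)
  have "(c / n) *\<^sub>R (c *\<^sub>R P - d *\<^sub>R Q) - (- d / n) *\<^sub>R (d *\<^sub>R P + c *\<^sub>R Q)
          = ((c * c + d * d) / n) *\<^sub>R P"
    "(- d / n) *\<^sub>R (c *\<^sub>R P - d *\<^sub>R Q) + (c / n) *\<^sub>R (d *\<^sub>R P + c *\<^sub>R Q)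
          = ((c * c + d * d) / n) *\<^sub>R Q"
    by (simp_all add: algebra_simps add_divide_distrib)
  then have "cmult z (c *\<^sub>R P - d *\<^sub>R Q, d *\<^sub>R P + c *\<^sub>R Q) = (P, Q)"
    using \<open>0 < n\<close> by (simp add: cmult_def z_def flip: n_def)
  then show ?thesis unfolding coneC_def using \<open>z \<noteq> 0\<close> assms(2,3) by force
qed

lemma coneC_cmult:
  assumes "v \<in> coneC S" "z \<noteq> 0"
  shows "cmult z v \<in> coneC S"
  using assms unfolding coneC_def by (auto simp: cmult_cmult) (metis mult_eq_0_iff)

lemma coneR_imp_coneC:
  assumes "a \<in> coneR S"
  shows "(a, 0) \<in> coneC S"
  using coneC_of_rotation[of 1 1 a 0 S] assms by simp

lemma dual_coneC_nonzero:
  assumes "f \<in> dual_coneC S" "v \<in> coneC S"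
  shows "f v \<noteq> 0"
  using assms by (simp add: dual_coneC_def)

lemma (in pointed_cone) add_mult_in_coneC:
  assumes p: "\<forall>l\<in>S. 0 \<le> l p" and q: "\<forall>l\<in>S. 0 \<le> l q" and "p + q \<noteq> 0" and "0 < Re \<nu>"
  shows "(p + Re \<nu> *\<^sub>R q, Im \<nu> *\<^sub>R q) \<in> coneC S"
proof (rule coneC_of_rotation)
  \<comment> \<open>rotating by \<open>1 + i t\<close> moves \<open>\<nu>\<close> into the open first quadrant\<close>
  define t where "t = (cmod \<nu> - Im \<nu>) / Re \<nu>"
  have "\<bar>Im \<nu>\<bar> < cmod \<nu>"
    using \<open>0 < Re \<nu>\<close> by (simp add: cmod_def real_less_rsqrt)
  then have t: "0 < t" using \<open>0 < Re \<nu>\<close> by (simp add: t_def)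
  have "cmod \<nu> * cmod \<nu> = Re \<nu> * Re \<nu> + Im \<nu> * Im \<nu>"
    using cmod_power2[of \<nu>] by (simp add: power2_eq_square)
  then have coeff1: "Re \<nu> - t * Im \<nu> = cmod \<nu> * t"
    using \<open>0 < Re \<nu>\<close> by (simp add: t_def field_simps)
  have coeff2: "t * Re \<nu> + Im \<nu> = cmod \<nu>"
    using \<open>0 < Re \<nu>\<close> by (simp add: t_def field_simps)
  have "0 < cmod \<nu>" using \<open>0 < Re \<nu>\<close> by auto
  have eq1: "1 *\<^sub>R (p + Re \<nu> *\<^sub>R q) - t *\<^sub>R Im \<nu> *\<^sub>R q = 1 *\<^sub>R p + (Re \<nu> - t * Im \<nu>) *\<^sub>R q"
    by (simp add: algebra_simps)
  have "1 *\<^sub>R p + (cmod \<nu> * t) *\<^sub>R q \<in> coneR S"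
    using pos_comb_in_coneR[OF p q \<open>p + q \<noteq> 0\<close>, of 1 "cmod \<nu> * t"] t \<open>0 < cmod \<nu>\<close> by simp
  then show "1 *\<^sub>R (p + Re \<nu> *\<^sub>R q) - t *\<^sub>R Im \<nu> *\<^sub>R q \<in> coneR S"
    by (simp only: eq1 coeff1)
  have eq2: "t *\<^sub>R (p + Re \<nu> *\<^sub>R q) + 1 *\<^sub>R Im \<nu> *\<^sub>R q = t *\<^sub>R p + (t * Re \<nu> + Im \<nu>) *\<^sub>R q"
    by (simp add: algebra_simps)
  have "t *\<^sub>R p + cmod \<nu> *\<^sub>R q \<in> coneR S"
    using pos_comb_in_coneR[OF p q \<open>p + q \<noteq> 0\<close>] t \<open>0 < cmod \<nu>\<close> by simp
  then show "t *\<^sub>R (p + Re \<nu> *\<^sub>R q) + 1 *\<^sub>R Im \<nu> *\<^sub>R q \<in> coneR S"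
    by (simp only: eq2 coeff2)
qed simp

lemma (in pointed_cone) dual_add_mult_nonzero:
  assumes f: "f \<in> dual_coneC S"
    and "\<forall>l\<in>S. 0 \<le> l p" "\<forall>l\<in>S. 0 \<le> l q" "p + q \<noteq> 0" "0 < Re \<nu>"
  shows "f (p, 0) + \<nu> * f (q, 0) \<noteq> 0"
proof -
  have cf: "cbounded_functional f" using f by (simp add: dual_coneC_def)
  have "f (p + Re \<nu> *\<^sub>R q, Im \<nu> *\<^sub>R q) = f (p + Re \<nu> *\<^sub>R q, 0) + \<i> * f (Im \<nu> *\<^sub>R q, 0)"
    by (rule cbounded_functional_pair[OF cf])
  also have "\<dots> = f (p, 0) + (Re \<nu> + \<i> * Im \<nu>) * f (q, 0)"
    by (simp add: cbounded_functional_simps[OF cf] algebra_simps)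
  also have "Re \<nu> + \<i> * Im \<nu> = \<nu>" by (simp add: complex_eq_iff)
  finally show ?thesis using dual_coneC_nonzero[OF f add_mult_in_coneC[OF assms(2-)]] by simp
qed

lemma Re_quotient_pos_outside_disk:
  fixes w :: complex
  assumes "(hi - lo) / 2 < cmod (w - of_real ((lo + hi) / 2))" "lo \<le> hi"
  shows "0 < Re ((of_real lo - w) / (of_real hi - w))"
proof -
  have "((hi - lo) / 2)\<^sup>2 < (cmod (w - of_real ((lo + hi) / 2)))\<^sup>2"
    using assms by (simp add: power_strict_mono)
  moreover have "Re ((of_real lo - w) * cnj (of_real hi - w))
                   = (cmod (w - of_real ((lo + hi) / 2)))\<^sup>2 - ((hi - lo) / 2)\<^sup>2"
    unfolding cmod_power2 by (simp add: power2_eq_square field_simps)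
  ultimately have "0 < Re ((of_real lo - w) * cnj (of_real hi - w))" by linarith
  then show ?thesis
    by (cases "of_real hi - w = 0")
      (auto simp: complex_div_cnj[of "of_real lo - w"] Re_divide_of_real)
qed

lemma (in pointed_cone) dual_ratio_in_disk:
  assumes f: "f \<in> dual_coneC S" and a: "a \<in> coneR S" and ab: "cone_bounds S a lo hi b"
  shows "cmod (f (b, 0) / f (a, 0) - of_real ((lo + hi) / 2)) \<le> (hi - lo) / 2"
proof -
  have cf: "cbounded_functional f" using f by (simp add: dual_coneC_def)
  note f_simps = cbounded_functional_simps[OF cf]
  define p where "p = b - lo *\<^sub>R a"
  define q where "q = hi *\<^sub>R a - b"
  have p: "\<forall>l\<in>S. 0 \<le> l p" and q: "\<forall>l\<in>S. 0 \<le> l q"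
    using ab by (auto simp: cone_bounds_def p_def q_def functional_simps)
  have fa: "f (a, 0) \<noteq> 0" using dual_coneC_nonzero[OF f coneR_imp_coneC[OF a]] .
  define w where "w = f (b, 0) / f (a, 0)"
  show ?thesis
  proof (cases "lo = hi")
    case True
    then have "\<forall>l\<in>S. l p = 0" using p q by (force simp: p_def q_def functional_simps)
    then have "p = 0" by (rule pointed)
    then have "b = lo *\<^sub>R a" by (simp add: p_def)
    then show ?thesis using True fa by (simp add: f_simps)
  next
    case False
    then have "0 < hi - lo" using ab by (simp add: cone_bounds_def)
    then have "p + q \<noteq> 0" using a by (simp add: p_def q_def coneR_def flip: scaleR_diff_left)
    have "of_real hi * f (p, 0) + of_real lo * f (q, 0) = of_real (hi - lo) * f (b, 0)"
      "f (p, 0) + f (q, 0) = of_real (hi - lo) * f (a, 0)"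
      by (simp_all add: p_def q_def f_simps algebra_simps)
    then have pq: "of_real hi * f (p, 0) + of_real lo * f (q, 0) = w * (f (p, 0) + f (q, 0))"
      using fa by (simp add: w_def)
    show ?thesis
    proof (rule ccontr)
      define \<nu> where "\<nu> = (of_real lo - w) / (of_real hi - w)"
      assume "\<not> ?thesis"
      then have "0 < Re \<nu>"
        using Re_quotient_pos_outside_disk \<open>0 < hi - lo\<close> by (simp add: \<nu>_def w_def)
      then have hw: "of_real hi - w \<noteq> 0" by (auto simp: \<nu>_def)
      then have "(of_real hi - w) * (f (p, 0) + \<nu> * f (q, 0))
                   = (of_real hi - w) * f (p, 0) + (of_real lo - w) * f (q, 0)"
        by (simp add: \<nu>_def distrib_left flip: mult.assoc)
      also have "\<dots> = 0" using pq by (simp add: algebra_simps)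
      finally show False
        using \<open>0 < Re \<nu>\<close> hw dual_add_mult_nonzero[OF f p q \<open>p + q \<noteq> 0\<close>] by simp
    qed
  qed
qed

lemma in_disk_norm_bounds:
  fixes w :: complex
  assumes w: "cmod (w - of_real ((lo + hi) / 2)) \<le> (hi - lo) / 2" and "0 \<le> lo"
  shows "lo \<le> cmod w" "cmod w \<le> hi"
proof -
  define c where "c = (lo + hi) / 2"
  have "0 \<le> (hi - lo) / 2" using w norm_ge_zero[of "w - of_real ((lo + hi) / 2)"] by linarith
  then have "0 \<le> c" using \<open>0 \<le> lo\<close> by (simp add: c_def)
  have "\<bar>cmod w - c\<bar> \<le> cmod (w - of_real c)"
    using norm_triangle_ineq3[of w "of_real c"] \<open>0 \<le> c\<close> by simp
  also have "\<dots> \<le> (hi - lo) / 2" using w unfolding c_def .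
  finally have le: "\<bar>cmod w - c\<bar> \<le> (hi - lo) / 2" .
  show "lo \<le> cmod w" using abs_le_D2[OF le] unfolding c_def by argo
  show "cmod w \<le> hi" using abs_le_D1[OF le] unfolding c_def by argo
qed

lemma in_disk_norm_one_plus_ii_mult:
  fixes w :: complex
  assumes "cmod (w - of_real ((lo + hi) / 2)) \<le> (hi - lo) / 2" and "0 \<le> lo"
  shows "(1 + lo * hi) / (1 + hi) \<le> cmod (1 + \<i> * w)"
proof -
  define c where "c = (lo + hi) / 2"
  define r where "r = (hi - lo) / 2"
  define s where "s = cmod (of_real c - \<i>)"
  \<comment> \<open>the distance from \<open>i\<close> to the disk is at least \<open>s - r\<close>\<close>
  have w: "cmod (w - of_real c) \<le> r" using assms(1) by (simp only: c_def r_def)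
  have "0 \<le> r" using w norm_ge_zero[of "w - of_real c"] by linarith
  have "0 \<le> c" "c + r = hi" using \<open>0 \<le> r\<close> \<open>0 \<le> lo\<close> by (simp_all add: c_def r_def field_simps)
  have s2: "s\<^sup>2 = c\<^sup>2 + 1" by (simp add: s_def cmod_power2)
  have "s\<^sup>2 \<le> (c + 1)\<^sup>2" using s2 \<open>0 \<le> c\<close> by (simp add: power2_eq_square algebra_simps)
  then have "s \<le> c + 1" by (rule power2_le_imp_le) (use \<open>0 \<le> c\<close> in simp)
  have "1\<^sup>2 \<le> s\<^sup>2" using s2 by simp
  then have "1 \<le> s" by (rule power2_le_imp_le) (simp add: s_def)
  have prod: "(s - r) * (s + r) = 1 + lo * hi"
    using s2 by (simp add: c_def r_def power2_eq_square field_simps)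
  have "(1 + lo * hi) / (1 + hi) \<le> (1 + lo * hi) / (s + r)"
    using \<open>s \<le> c + 1\<close> \<open>1 \<le> s\<close> \<open>0 \<le> r\<close> \<open>c + r = hi\<close> \<open>0 \<le> lo\<close>
    by (intro divide_left_mono) auto
  also have "\<dots> = s - r" using prod \<open>1 \<le> s\<close> \<open>0 \<le> r\<close> by (simp add: field_simps)
  also have "\<dots> \<le> cmod (w - \<i>)"
    using norm_triangle_ineq2[of "of_real c - \<i>" "of_real c - w"] w
    by (simp add: s_def norm_minus_commute)
  also have "\<dots> = cmod (1 + \<i> * w)"
    using norm_mult[of \<i> "w - \<i>"] by (simp add: algebra_simps)
  finally show ?thesis .
qed

definition close_to :: "('a \<Rightarrow> real) set \<Rightarrow> real \<Rightarrow> 'a \<Rightarrow> 'a \<times> 'a \<Rightarrow> bool" where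
  "close_to S \<epsilon> a X \<longleftrightarrow> (\<forall>l\<in>S. cmod (cext l X - of_real (l a)) \<le> \<epsilon> * l a)"

lemma (in pointed_cone) perturbation_in_coneC:
  assumes a: "a \<in> coneR S" and small: "\<forall>l\<in>S. 3 * cmod (cext l W) \<le> l a"
  shows "(a, 0) + W \<in> coneC S"
proof -
  obtain P Q where W: "W = (P, Q)" by fastforce
  have "1/3 * l a \<le> l (a + P - Q) \<and> 1/3 * l a \<le> l (a + P + Q)" if l: "l \<in> S" for l
  proof -
    have "\<bar>l P\<bar> \<le> cmod (cext l W)" "\<bar>l Q\<bar> \<le> cmod (cext l W)"
      using abs_Re_le_cmod[of "cext l W"] abs_Im_le_cmod[of "cext l W"]
      by (simp_all add: W cext_def)
    moreover have "3 * cmod (cext l W) \<le> l a" using small l by blast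
    ultimately show ?thesis by (auto simp: functional_simps[OF l] abs_le_iff)
  qed
  then have "a + P - Q \<in> coneR S" "a + P + Q \<in> coneR S"
    by (auto intro!: coneR_of_ge[OF a, of "1/3"])
  then show ?thesis using coneC_of_rotation[of 1 1 "a + P" Q S] W by simp
qed

lemma (in pointed_cone) dual_close:
  assumes f: "f \<in> dual_coneC S" and a: "a \<in> coneR S" and "0 \<le> \<epsilon>" and X: "close_to S \<epsilon> a X"
  shows "cmod (f X - f (a, 0)) \<le> 3 * \<epsilon> * cmod (f (a, 0))"
proof (rule ccontr)
  have cf: "cbounded_functional f" using f by (simp add: dual_coneC_def)
  define w where "w = X - (a, 0)"
  assume "\<not> ?thesis"
  then have big: "3 * \<epsilon> * cmod (f (a, 0)) < cmod (f w)"
    by (simp add: w_def cbounded_functional_simps[OF cf])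
  then have "f w \<noteq> 0" using \<open>0 \<le> \<epsilon>\<close> by (smt (verit) mult_nonneg_nonneg norm_ge_zero norm_zero)
  define \<zeta> where "\<zeta> = - f (a, 0) / f w"
  \<comment> \<open>\<open>f\<close> vanishes at \<open>(a, 0) + \<zeta> w\<close>, which is too close to \<open>(a, 0)\<close> to leave the cone\<close>
  have "3 * \<epsilon> * cmod \<zeta> \<le> 1"
    using big \<open>f w \<noteq> 0\<close> by (simp add: \<zeta>_def norm_divide field_simps)
  have "3 * cmod (cext l (cmult \<zeta> w)) \<le> l a" if l: "l \<in> S" for l
  proof -
    have lin: "linear l" using l by (rule linear_functional)
    have "cmod (cext l w) \<le> \<epsilon> * l a"
      using X l by (simp add: close_to_def w_def cext_simps[OF lin])
    then have "3 * cmod (cext l (cmult \<zeta> w)) \<le> 3 * cmod \<zeta> * (\<epsilon> * l a)"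
      using mult_left_mono[of _ _ "3 * cmod \<zeta>"] by (simp add: cext_simps[OF lin] norm_mult)
    also have "\<dots> = (3 * \<epsilon> * cmod \<zeta>) * l a" by simp
    also have "\<dots> \<le> l a"
      using \<open>3 * \<epsilon> * cmod \<zeta> \<le> 1\<close> \<open>0 \<le> \<epsilon>\<close> a l
      by (intro mult_left_le_one_le) (auto simp: coneR_def)
    finally show ?thesis .
  qed
  then have "(a, 0) + cmult \<zeta> w \<in> coneC S" by (intro perturbation_in_coneC[OF a]) blast
  moreover have "f ((a, 0) + cmult \<zeta> w) = 0"
    using \<open>f w \<noteq> 0\<close> by (simp add: \<zeta>_def cbounded_functional_simps[OF cf])
  ultimately show False using dual_coneC_nonzero[OF f] by blast
qed

section \<open>Perturbed pairs\<close>

lemma ratio_bound_ge_one: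
  fixes lo hi E :: real
  assumes "0 < lo" "lo \<le> hi" "hi \<le> E * lo"
  shows "1 \<le> E"
  using assms by (smt (verit) mult_le_cancel_right1)

lemma sq_one_plus_le:
  fixes lo hi E :: real
  assumes "0 < lo" "lo \<le> hi" "hi \<le> E * lo"
  shows "(1 + hi)\<^sup>2 \<le> 2 * E * (1 + lo * hi)"
proof -
  have "1 \<le> E" using assms by (rule ratio_bound_ge_one)
  have "0 \<le> (1 - hi)\<^sup>2" by simp
  then have "(1 + hi)\<^sup>2 \<le> 2 * (1 + hi * hi)" by (simp add: power2_eq_square algebra_simps)
  also have "hi * hi \<le> (E * lo) * hi" using assms by (intro mult_right_mono) auto
  then have "2 * (1 + hi * hi) \<le> 2 * (1 + E * (lo * hi))" by (simp add: mult.assoc)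
  also have "\<dots> \<le> 2 * E * (1 + lo * hi)" using \<open>1 \<le> E\<close> by (simp add: algebra_simps)
  finally show ?thesis .
qed

lemma eps_sq_one_plus_le:
  fixes lo hi E \<epsilon> :: real
  assumes "0 < lo" "lo \<le> hi" "hi \<le> E * lo" "0 \<le> \<epsilon>" "16 * \<epsilon> * E \<le> 1"
  shows "8 * \<epsilon> * (1 + hi)\<^sup>2 \<le> 1 + lo * hi"
proof -
  have "1 \<le> E" using assms(1-3) by (rule ratio_bound_ge_one)
  have "8 * \<epsilon> * (1 + hi)\<^sup>2 \<le> 8 * \<epsilon> * (2 * E * (1 + lo * hi))"
    using sq_one_plus_le[OF assms(1-3)] \<open>0 \<le> \<epsilon>\<close> by (intro mult_left_mono) auto
  also have "\<dots> = (16 * \<epsilon> * E) * (1 + lo * hi)" by simp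
  also have "\<dots> \<le> 1 + lo * hi"
    using assms \<open>1 \<le> E\<close> by (intro mult_left_le_one_le) auto
  finally show ?thesis .
qed

text \<open>For \<open>lo \<le> t \<le> hi\<close>, multiplication by \<open>c + i d\<close> moves \<open>1 + i t\<close> into the first quadrant,
  at distance at least \<open>(1 + lo) (1 + lo hi)\<close> from both axes.\<close>
lemma rotation_main_terms:
  fixes A B lo hi :: real
  defines "c \<equiv> 1 + 2 * hi + lo * hi" and "d \<equiv> 1 - lo * hi"
  assumes "0 \<le> A" "lo * A \<le> B" "B \<le> hi * A" "0 < lo" "lo \<le> hi"
  shows "(1 + lo) * (1 + lo * hi) * A \<le> c * A - d * B"
    and "(1 + lo) * (1 + lo * hi) * A \<le> d * A + c * B"
proof -
  show "(1 + lo) * (1 + lo * hi) * A \<le> c * A - d * B"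
  proof (cases "0 \<le> d")
    case True
    then have "d * B \<le> d * (hi * A)" using assms by (simp add: mult_left_mono)
    moreover have "(1 + lo) * (1 + lo * hi) * A \<le> (1 + hi) * (1 + lo * hi) * A"
      using assms by (intro mult_right_mono) auto
    ultimately show ?thesis by (simp add: c_def d_def algebra_simps)
  next
    case False
    then have "d * B \<le> d * (lo * A)" using assms by (simp add: mult_left_mono_neg)
    moreover have "0 \<le> (hi - lo) * A" using assms by simp
    ultimately show ?thesis by (simp add: c_def d_def algebra_simps)
  qed
  have "c * (lo * A) \<le> c * B" using assms by (intro mult_left_mono) (auto simp: c_def)
  then show "(1 + lo) * (1 + lo * hi) * A \<le> d * A + c * B"
    by (simp add: c_def d_def algebra_simps)
qed

lemma rotation_error:
  fixes A B lo hi \<epsilon> :: real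
  defines "c \<equiv> 1 + 2 * hi + lo * hi" and "d \<equiv> 1 - lo * hi"
  assumes "0 \<le> A" "B \<le> hi * A" "0 < lo" "lo \<le> hi" "0 \<le> \<epsilon>" "0 \<le> A + B"
    and small: "8 * \<epsilon> * (1 + hi)\<^sup>2 \<le> 1 + lo * hi"
  shows "(c + \<bar>d\<bar>) * (\<epsilon> * (A + B)) \<le> (1 + lo) * (1 + lo * hi) * A / 4"
proof -
  have "c + \<bar>d\<bar> \<le> 2 * (1 + lo) * (1 + hi)"
    using assms by (simp add: c_def d_def abs_if algebra_simps)
  moreover have "\<epsilon> * (A + B) \<le> \<epsilon> * ((1 + hi) * A)"
    using assms by (intro mult_left_mono) (auto simp: algebra_simps)
  ultimately have "(c + \<bar>d\<bar>) * (\<epsilon> * (A + B)) \<le> (2 * (1 + lo) * (1 + hi)) * (\<epsilon> * ((1 + hi) * A))"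
    by (rule mult_mono) (use assms in auto)
  also have "\<dots> = (1 + lo) * A / 4 * (8 * \<epsilon> * (1 + hi)\<^sup>2)"
    by (simp add: power2_eq_square)
  also have "\<dots> \<le> (1 + lo) * A / 4 * (1 + lo * hi)"
    using small assms by (intro mult_left_mono) auto
  finally show ?thesis by (simp add: mult_ac)
qed

lemma rotation_lower_bounds:
  fixes A B lo hi \<epsilon> r1 r2 :: real
  defines "c \<equiv> 1 + 2 * hi + lo * hi" and "d \<equiv> 1 - lo * hi"
  assumes "0 \<le> A" "lo * A \<le> B" "B \<le> hi * A" "0 < lo" "lo \<le> hi" "0 \<le> \<epsilon>"
    and small: "8 * \<epsilon> * (1 + hi)\<^sup>2 \<le> 1 + lo * hi"
    and r: "\<bar>r1\<bar> \<le> \<epsilon> * (A + B)" "\<bar>r2\<bar> \<le> \<epsilon> * (A + B)"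
  shows "A / 2 \<le> c * (A + r1) - d * (B + r2)" and "A / 2 \<le> d * (A + r1) + c * (B + r2)"
proof -
  define K where "K = (1 + lo) * (1 + lo * hi) * A"
  have "1 * 1 \<le> (1 + lo) * (1 + lo * hi)" using assms by (intro mult_mono) auto
  then have "A \<le> K" using mult_right_mono[of 1 _ A] \<open>0 \<le> A\<close> by (simp add: K_def)
  have "0 \<le> c" using assms by (simp add: c_def)
  have "0 \<le> A + B" using assms by (smt (verit) mult_nonneg_nonneg)
  have err: "(c + \<bar>d\<bar>) * (\<epsilon> * (A + B)) \<le> K / 4"
    unfolding K_def c_def d_def using rotation_error assms \<open>0 \<le> A + B\<close> by blast
  have "\<bar>c * r1\<bar> + \<bar>d * r2\<bar> \<le> (c + \<bar>d\<bar>) * (\<epsilon> * (A + B))"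
    "\<bar>d * r1\<bar> + \<bar>c * r2\<bar> \<le> (c + \<bar>d\<bar>) * (\<epsilon> * (A + B))"
    using r \<open>0 \<le> c\<close> unfolding abs_mult distrib_right
    by (auto intro!: add_mono mult_left_mono simp: add.commute)
  moreover have "K \<le> c * A - d * B" "K \<le> d * A + c * B"
    unfolding K_def c_def d_def using rotation_main_terms assms by blast+
  moreover have "c * (A + r1) - d * (B + r2) = (c * A - d * B) + (c * r1 - d * r2)"
    "d * (A + r1) + c * (B + r2) = (d * A + c * B) + (d * r1 + c * r2)"
    by (simp_all add: algebra_simps)
  moreover note abs_ge_minus_self[of "c * r1"] abs_ge_self[of "d * r2"]
    abs_ge_minus_self[of "d * r1"] abs_ge_minus_self[of "c * r2"]
  ultimately show "A / 2 \<le> c * (A + r1) - d * (B + r2)" "A / 2 \<le> d * (A + r1) + c * (B + r2)"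
    using err \<open>A \<le> K\<close> \<open>0 \<le> A\<close> by linarith+
qed

lemma (in pointed_cone) perturbed_pair_in_coneC:
  assumes a: "a \<in> coneR S" and ab: "cone_bounds S a lo hi b" and "0 \<le> \<epsilon>"
    and small: "8 * \<epsilon> * (1 + hi)\<^sup>2 \<le> 1 + lo * hi"
    and X: "close_to S \<epsilon> a X" and Y: "close_to S \<epsilon> b Y"
  shows "X + cmult \<i> Y \<in> coneC S"
proof -
  obtain U V where UV: "X + cmult \<i> Y = (U, V)" by fastforce
  define c where "c = 1 + 2 * hi + lo * hi"
  define d where "d = 1 - lo * hi"
  have "1/2 * l a \<le> l (c *\<^sub>R U - d *\<^sub>R V) \<and> 1/2 * l a \<le> l (d *\<^sub>R U + c *\<^sub>R V)" if l: "l \<in> S" for l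
  proof -
    have lin: "linear l" using l by (rule linear_functional)
    define \<delta>X where "\<delta>X = cext l X - of_real (l a)"
    define \<delta>Y where "\<delta>Y = cext l Y - of_real (l b)"
    have "cext l (U, V) = cext l X + \<i> * cext l Y"
      unfolding UV[symmetric] by (simp add: cext_simps[OF lin])
    then have lUV: "l U = l a + (Re \<delta>X - Im \<delta>Y)" "l V = l b + (Im \<delta>X + Re \<delta>Y)"
      by (simp_all add: \<delta>X_def \<delta>Y_def cext_def complex_eq_iff)
    have "cmod \<delta>X \<le> \<epsilon> * l a" "cmod \<delta>Y \<le> \<epsilon> * l b"
      using X Y l by (simp_all add: close_to_def \<delta>X_def \<delta>Y_def)
    then have "\<bar>Re \<delta>X - Im \<delta>Y\<bar> \<le> \<epsilon> * (l a + l b)" "\<bar>Im \<delta>X + Re \<delta>Y\<bar> \<le> \<epsilon> * (l a + l b)"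
      using abs_Re_le_cmod[of \<delta>X] abs_Im_le_cmod[of \<delta>X] abs_Re_le_cmod[of \<delta>Y] abs_Im_le_cmod[of \<delta>Y]
      by (simp_all add: distrib_left abs_le_iff)
    moreover have "0 \<le> l a" "lo * l a \<le> l b" "l b \<le> hi * l a" "0 < lo" "lo \<le> hi"
      using a ab l by (auto simp: coneR_def cone_bounds_def)
    ultimately show ?thesis
      using rotation_lower_bounds[of "l a" lo "l b" hi \<epsilon>] small \<open>0 \<le> \<epsilon>\<close>
      by (simp add: functional_simps[OF l] lUV c_def d_def)
  qed
  then have "c *\<^sub>R U - d *\<^sub>R V \<in> coneR S" "d *\<^sub>R U + c *\<^sub>R V \<in> coneR S"
    by (auto intro!: coneR_of_ge[OF a, of "1/2"])
  moreover have "0 < hi" "0 \<le> lo * hi" using ab by (auto simp: cone_bounds_def)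
  then have "c \<noteq> 0" unfolding c_def by linarith
  ultimately show ?thesis using coneC_of_rotation UV by metis
qed

lemma (in pointed_cone) dual_perturbed_pair_error:
  assumes f: "f \<in> dual_coneC S" and a: "a \<in> coneR S" and ab: "cone_bounds S a lo hi b"
    and "0 \<le> \<epsilon>" and X: "close_to S \<epsilon> a X" and Y: "close_to S \<epsilon> b Y"
  shows "cmod (f (X + cmult \<i> Y) - (f (a, 0) + \<i> * f (b, 0)))
           \<le> 3 * \<epsilon> * (1 + hi) * cmod (f (a, 0))"
proof -
  have cf: "cbounded_functional f" using f by (simp add: dual_coneC_def)
  have b: "b \<in> coneR S" using cone_bounds_imp_coneR[OF a ab] .
  have "0 < lo" using ab by (simp add: cone_bounds_def)
  have eq: "f (X + cmult \<i> Y) - (f (a, 0) + \<i> * f (b, 0))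
              = (f X - f (a, 0)) + \<i> * (f Y - f (b, 0))"
    by (simp add: cbounded_functional_simps[OF cf] algebra_simps)
  have triangle: "cmod (f (X + cmult \<i> Y) - (f (a, 0) + \<i> * f (b, 0)))
                    \<le> cmod (f X - f (a, 0)) + cmod (f Y - f (b, 0))"
    unfolding eq using norm_triangle_ineq[of "f X - f (a, 0)" "\<i> * (f Y - f (b, 0))"]
    by (simp add: norm_mult)
  have "f (a, 0) \<noteq> 0" using dual_coneC_nonzero[OF f coneR_imp_coneC[OF a]] .
  then have "cmod (f (b, 0)) \<le> hi * cmod (f (a, 0))"
    using in_disk_norm_bounds(2)[OF dual_ratio_in_disk[OF f a ab]] \<open>0 < lo\<close>
    by (simp add: norm_divide divide_le_eq)
  then have "cmod (f Y - f (b, 0)) \<le> 3 * \<epsilon> * (hi * cmod (f (a, 0)))"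
    using dual_close[OF f b \<open>0 \<le> \<epsilon>\<close> Y] \<open>0 \<le> \<epsilon>\<close> by (smt (verit) mult_left_mono)
  moreover have "cmod (f X - f (a, 0)) \<le> 3 * \<epsilon> * cmod (f (a, 0))"
    using dual_close[OF f a \<open>0 \<le> \<epsilon>\<close> X] .
  moreover have "3 * \<epsilon> * (1 + hi) * cmod (f (a, 0))
                   = 3 * \<epsilon> * cmod (f (a, 0)) + 3 * \<epsilon> * (hi * cmod (f (a, 0)))"
    by (simp add: algebra_simps)
  ultimately show ?thesis using triangle by linarith
qed

lemma (in pointed_cone) dual_perturbed_pair_bounds:
  assumes f: "f \<in> dual_coneC S" and a: "a \<in> coneR S" and ab: "cone_bounds S a lo hi b"
    and "0 \<le> \<epsilon>" and X: "close_to S \<epsilon> a X" and Y: "close_to S \<epsilon> b Y"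
  shows "((1 + lo * hi) / (1 + hi) - 3 * \<epsilon> * (1 + hi)) * cmod (f (a, 0)) \<le> cmod (f (X + cmult \<i> Y))"
    and "cmod (f (X + cmult \<i> Y)) \<le> (1 + 3 * \<epsilon>) * (1 + hi) * cmod (f (a, 0))"
proof -
  have "0 < lo" using ab by (simp add: cone_bounds_def)
  define fa where "fa = f (a, 0)"
  define w where "w = f (b, 0) / fa"
  have "fa \<noteq> 0" using dual_coneC_nonzero[OF f coneR_imp_coneC[OF a]] by (simp add: fa_def)
  then have pair: "f (a, 0) + \<i> * f (b, 0) = fa * (1 + \<i> * w)"
    by (simp add: fa_def w_def field_simps)
  have disk: "cmod (w - of_real ((lo + hi) / 2)) \<le> (hi - lo) / 2"
    using dual_ratio_in_disk[OF f a ab] by (simp add: w_def fa_def)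
  have main_lo: "(1 + lo * hi) / (1 + hi) * cmod fa \<le> cmod (fa * (1 + \<i> * w))"
    using mult_right_mono[OF in_disk_norm_one_plus_ii_mult[OF disk], of "cmod fa"] \<open>0 < lo\<close>
    by (simp add: norm_mult mult.commute)
  have "cmod (1 + \<i> * w) \<le> 1 + hi"
    using norm_triangle_ineq[of 1 "\<i> * w"] in_disk_norm_bounds(2)[OF disk] \<open>0 < lo\<close>
    by (simp add: norm_mult)
  from mult_left_mono[OF this norm_ge_zero[of fa]]
  have main_hi: "cmod (fa * (1 + \<i> * w)) \<le> (1 + hi) * cmod fa" by (simp add: norm_mult mult.commute)
  note err = dual_perturbed_pair_error[OF f a ab \<open>0 \<le> \<epsilon>\<close> X Y, unfolded pair, folded fa_def]
  show "((1 + lo * hi) / (1 + hi) - 3 * \<epsilon> * (1 + hi)) * cmod (f (a, 0)) \<le> cmod (f (X + cmult \<i> Y))"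
    using main_lo err norm_triangle_ineq2[of "fa * (1 + \<i> * w)" "f (X + cmult \<i> Y)"]
    by (simp add: fa_def left_diff_distrib norm_minus_commute)
  show "cmod (f (X + cmult \<i> Y)) \<le> (1 + 3 * \<epsilon>) * (1 + hi) * cmod (f (a, 0))"
    using main_hi err norm_triangle_ineq2[of "f (X + cmult \<i> Y)" "fa * (1 + \<i> * w)"]
    by (simp add: fa_def algebra_simps)
qed

definition dual_comparable ::
    "('a::real_normed_vector \<Rightarrow> real) set \<Rightarrow> real \<Rightarrow> 'a \<times> 'a \<Rightarrow> 'a \<times> 'a \<Rightarrow> bool" where
  "dual_comparable S R r u \<longleftrightarrow>
     (\<exists>p>0. \<forall>f\<in>dual_coneC S. p * cmod (f r) \<le> cmod (f u) \<and> cmod (f u) \<le> R * p * cmod (f r))"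

lemma dual_comparable_mono:
  assumes "dual_comparable S R r u" "R \<le> R'"
  shows "dual_comparable S R' r u"
proof -
  obtain p where "0 < p"
    and p: "\<And>f. f \<in> dual_coneC S \<Longrightarrow> p * cmod (f r) \<le> cmod (f u) \<and> cmod (f u) \<le> R * p * cmod (f r)"
    using assms by (auto simp: dual_comparable_def)
  have "R * p * cmod (f r) \<le> R' * p * cmod (f r)" for f
    using assms(2) \<open>0 < p\<close> by (intro mult_right_mono) auto
  then show ?thesis using \<open>0 < p\<close> p unfolding dual_comparable_def by (meson order_trans)
qed

lemma dual_comparable_trans:
  assumes "dual_comparable S R r s" "dual_comparable S R' s u" "0 \<le> R'"
  shows "dual_comparable S (R * R') r u"
proof -
  obtain p q where "0 < p" "0 < q"
    and p: "\<And>f. f \<in> dual_coneC S \<Longrightarrow> p * cmod (f r) \<le> cmod (f s) \<and> cmod (f s) \<le> R * p * cmod (f r)"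
    and q: "\<And>f. f \<in> dual_coneC S \<Longrightarrow> q * cmod (f s) \<le> cmod (f u) \<and> cmod (f u) \<le> R' * q * cmod (f s)"
    using assms by (auto simp: dual_comparable_def)
  have "(p * q) * cmod (f r) \<le> cmod (f u) \<and> cmod (f u) \<le> (R * R') * (p * q) * cmod (f r)"
    if "f \<in> dual_coneC S" for f
  proof -
    have "q * (p * cmod (f r)) \<le> q * cmod (f s)"
      using p[OF that] \<open>0 < q\<close> by (intro mult_left_mono) auto
    moreover have "R' * q * cmod (f s) \<le> R' * q * (R * p * cmod (f r))"
      using p[OF that] \<open>0 < q\<close> \<open>0 \<le> R'\<close> by (intro mult_left_mono) auto
    ultimately show ?thesis using q[OF that] by (simp add: algebra_simps)
  qed
  then show ?thesis using \<open>0 < p\<close> \<open>0 < q\<close> unfolding dual_comparable_def by (meson mult_pos_pos)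
qed

lemma dual_comparable_cmult:
  assumes "dual_comparable S R r u" "z \<noteq> 0"
  shows "dual_comparable S R r (cmult z u)"
proof -
  obtain p where "0 < p"
    and p: "\<And>f. f \<in> dual_coneC S \<Longrightarrow> p * cmod (f r) \<le> cmod (f u) \<and> cmod (f u) \<le> R * p * cmod (f r)"
    using assms by (auto simp: dual_comparable_def)
  have "(cmod z * p) * cmod (f r) \<le> cmod (f (cmult z u))
      \<and> cmod (f (cmult z u)) \<le> R * (cmod z * p) * cmod (f r)" if f: "f \<in> dual_coneC S" for f
  proof -
    have "cmod (f (cmult z u)) = cmod z * cmod (f u)"
      using f by (simp add: dual_coneC_def cbounded_functional_simps norm_mult)
    then show ?thesis
      using mult_left_mono[OF conjunct1[OF p[OF f]], of "cmod z"]
        mult_left_mono[OF conjunct2[OF p[OF f]], of "cmod z"] by (simp add: mult_ac)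
  qed
  then show ?thesis using \<open>0 < p\<close> assms(2) unfolding dual_comparable_def
    by (meson mult_pos_pos zero_less_norm_iff)
qed

lemma (in pointed_cone) dual_comparable_of_cone_bounds:
  assumes a0: "a0 \<in> coneR S" and bounds: "cone_bounds S a0 lo hi a"
  shows "dual_comparable S (hi / lo) (a0, 0) (a, 0)"
proof -
  have "0 < lo" using bounds by (simp add: cone_bounds_def)
  have "lo * cmod (f (a0, 0)) \<le> cmod (f (a, 0)) \<and> cmod (f (a, 0)) \<le> hi / lo * lo * cmod (f (a0, 0))"
    if f: "f \<in> dual_coneC S" for f
  proof -
    have "f (a0, 0) \<noteq> 0" using dual_coneC_nonzero[OF f coneR_imp_coneC[OF a0]] .
    moreover have "lo \<le> cmod (f (a, 0) / f (a0, 0))" "cmod (f (a, 0) / f (a0, 0)) \<le> hi"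
      using in_disk_norm_bounds[OF dual_ratio_in_disk[OF f a0 bounds]] \<open>0 < lo\<close> by auto
    ultimately show ?thesis using \<open>0 < lo\<close> by (simp add: norm_divide field_simps)
  qed
  then show ?thesis using \<open>0 < lo\<close> unfolding dual_comparable_def by blast
qed

lemma (in pointed_cone) perturbed_pair_comparable:
  assumes a: "a \<in> coneR S" and ab: "cone_bounds S a lo hi b" and "hi \<le> E * lo"
    and "0 \<le> \<epsilon>" and "16 * \<epsilon> * E \<le> 1" and X: "close_to S \<epsilon> a X" and Y: "close_to S \<epsilon> b Y"
  shows "dual_comparable S (4 * E) (a, 0) (X + cmult \<i> Y)"
proof -
  have "0 < lo" "lo \<le> hi" using ab by (auto simp: cone_bounds_def)
  then have "1 \<le> E" using \<open>hi \<le> E * lo\<close> by (rule ratio_bound_ge_one)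
  have "16 * \<epsilon> * 1 \<le> 16 * \<epsilon> * E" using \<open>1 \<le> E\<close> \<open>0 \<le> \<epsilon>\<close> by (intro mult_left_mono) auto
  then have "\<epsilon> \<le> 1/16" using \<open>16 * \<epsilon> * E \<le> 1\<close> by simp
  define G where "G = 1 + lo * hi"
  define p where "p = G / (1 + hi) - 3 * \<epsilon> * (1 + hi)"
  have "0 \<le> lo * hi" using \<open>0 < lo\<close> \<open>lo \<le> hi\<close> by (intro mult_nonneg_nonneg) auto
  then have "0 < G" by (simp add: G_def)
  have sq: "(1 + hi)\<^sup>2 \<le> 2 * E * G"
    using sq_one_plus_le[OF \<open>0 < lo\<close> \<open>lo \<le> hi\<close> \<open>hi \<le> E * lo\<close>] by (simp add: G_def)
  have "8 * \<epsilon> * (1 + hi)\<^sup>2 \<le> G"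
    using eps_sq_one_plus_le[OF \<open>0 < lo\<close> \<open>lo \<le> hi\<close> assms(3-5)] by (simp add: G_def)
  moreover have "(1 + hi) * p = G - 3 * \<epsilon> * (1 + hi)\<^sup>2"
    using \<open>0 < lo\<close> \<open>lo \<le> hi\<close> by (simp add: p_def field_simps power2_eq_square)
  ultimately have p_ge: "5/8 * G \<le> (1 + hi) * p" by simp
  then have "0 < (1 + hi) * p" using \<open>0 < G\<close> by linarith
  then have "0 < p" using \<open>0 < lo\<close> \<open>lo \<le> hi\<close> by (simp add: zero_less_mult_iff)
  have "(1 + 3 * \<epsilon>) * (1 + hi)\<^sup>2 \<le> 5/4 * (2 * E * G)"
    using sq \<open>\<epsilon> \<le> 1/16\<close> \<open>0 \<le> \<epsilon>\<close> \<open>0 < G\<close> \<open>1 \<le> E\<close> by (intro mult_mono) auto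
  also have "\<dots> \<le> 4 * E * ((1 + hi) * p)" using p_ge \<open>1 \<le> E\<close> by simp
  finally have "(1 + hi) * ((1 + 3 * \<epsilon>) * (1 + hi)) \<le> (1 + hi) * (4 * E * p)"
    by (simp add: power2_eq_square mult_ac)
  then have ratio: "(1 + 3 * \<epsilon>) * (1 + hi) \<le> 4 * E * p"
    using \<open>0 < lo\<close> \<open>lo \<le> hi\<close> by (simp add: mult_le_cancel_left_pos)
  have "p * cmod (f (a, 0)) \<le> cmod (f (X + cmult \<i> Y))
      \<and> cmod (f (X + cmult \<i> Y)) \<le> 4 * E * p * cmod (f (a, 0))" if f: "f \<in> dual_coneC S" for f
    using dual_perturbed_pair_bounds[OF f a ab \<open>0 \<le> \<epsilon>\<close> X Y]
      mult_right_mono[OF ratio norm_ge_zero[of "f (a, 0)"]]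
    by (simp add: p_def G_def)
  then show ?thesis using \<open>0 < p\<close> unfolding dual_comparable_def by blast
qed

lemma (in pointed_cone) cmult_perturbed_pair:
  assumes a0: "a0 \<in> coneR S" and a0a: "cone_bounds S a0 lo0 hi0 a" "hi0 \<le> E * lo0"
    and ab: "cone_bounds S a lo hi b" "hi \<le> E * lo" and \<epsilon>: "0 \<le> \<epsilon>" "16 * \<epsilon> * E \<le> 1"
    and XY: "close_to S \<epsilon> a X" "close_to S \<epsilon> b Y" and "z \<noteq> 0"
  shows "cmult z (X + cmult \<i> Y) \<in> coneC S"
    and "dual_comparable S (4 * E\<^sup>2) (a0, 0) (cmult z (X + cmult \<i> Y))"
proof -
  have a: "a \<in> coneR S" using cone_bounds_imp_coneR[OF a0 a0a(1)] .
  have "0 < lo0" using a0a by (simp add: cone_bounds_def)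
  have "0 < lo" "lo \<le> hi" using ab by (auto simp: cone_bounds_def)
  then have "1 \<le> E" using \<open>hi \<le> E * lo\<close> by (rule ratio_bound_ge_one)
  have "8 * \<epsilon> * (1 + hi)\<^sup>2 \<le> 1 + lo * hi" using eps_sq_one_plus_le \<open>0 < lo\<close> \<open>lo \<le> hi\<close> ab \<epsilon> by blast
  then show "cmult z (X + cmult \<i> Y) \<in> coneC S"
    using perturbed_pair_in_coneC[OF a ab(1) \<epsilon>(1) _ XY] coneC_cmult \<open>z \<noteq> 0\<close> by blast
  have "dual_comparable S (hi0 / lo0) (a0, 0) (a, 0)"
    by (rule dual_comparable_of_cone_bounds[OF a0 a0a(1)])
  then have a0_a: "dual_comparable S E (a0, 0) (a, 0)"
    by (rule dual_comparable_mono) (use a0a(2) \<open>0 < lo0\<close> in \<open>simp add: divide_le_eq\<close>)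
  have a_XY: "dual_comparable S (4 * E) (a, 0) (X + cmult \<i> Y)"
    by (rule perturbed_pair_comparable[OF a ab \<epsilon> XY])
  have "dual_comparable S (E * (4 * E)) (a0, 0) (X + cmult \<i> Y)"
    using dual_comparable_trans[OF a0_a a_XY] \<open>1 \<le> E\<close> by simp
  then show "dual_comparable S (4 * E\<^sup>2) (a0, 0) (cmult z (X + cmult \<i> Y))"
    using dual_comparable_cmult \<open>z \<noteq> 0\<close> by (simp add: power2_eq_square mult_ac)
qed

lemma (in pointed_cone) image_in_coneC_comparable:
  fixes L :: "'c::real_normed_vector \<Rightarrow> 'a" and LC :: "'c \<times> 'c \<Rightarrow> 'a \<times> 'a"
  assumes LC_lin: "cbounded_linear LC" and e: "e \<in> coneR S1" and Le: "L e \<in> coneR S"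
    and bounds: "\<And>x y. x \<in> coneR S1 \<Longrightarrow> y \<in> coneR S1 \<Longrightarrow>
                   \<exists>lo hi. cone_bounds S (L x) lo hi (L y) \<and> hi \<le> E * lo"
    and close: "\<And>h. h \<in> coneR S1 \<Longrightarrow> close_to S \<epsilon> (L h) (LC (h, 0))"
    and \<epsilon>: "0 \<le> \<epsilon>" "16 * \<epsilon> * E \<le> 1" and u_mem: "u \<in> LC ` coneC S1"
  shows "u \<in> coneC S \<and> dual_comparable S (4 * E\<^sup>2) (L e, 0) u"
proof -
  obtain z x y where "z \<noteq> 0" and x: "x \<in> coneR S1" and y: "y \<in> coneR S1"
    and u: "u = LC (cmult z (x, y))"
    using u_mem unfolding coneC_def by blast
  then have u_eq: "u = cmult z (LC (x, 0) + cmult \<i> (LC (y, 0)))"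
    using cbounded_linear_pair[OF LC_lin] cbounded_linear_cmult[OF LC_lin] by metis
  obtain lo0 hi0 where e_x: "cone_bounds S (L e) lo0 hi0 (L x)" "hi0 \<le> E * lo0"
    using bounds[OF e x] by blast
  obtain lo hi where x_y: "cone_bounds S (L x) lo hi (L y)" "hi \<le> E * lo"
    using bounds[OF x y] by blast
  show ?thesis
    using cmult_perturbed_pair[OF Le e_x x_y \<epsilon> close[OF x] close[OF y] \<open>z \<noteq> 0\<close>]
    unfolding u_eq by blast
qed

section \<open>Diameter estimates\<close>

lemma norm_le_cnorm:
  fixes x y :: "'a::real_normed_vector"
  shows "norm x \<le> cnorm (x, y)" "norm y \<le> cnorm (x, y)"
proof -
  define g where
    "g \<theta> = sqrt ((norm (fst (cmult (cis \<theta>) (x, y))))\<^sup>2 + (norm (snd (cmult (cis \<theta>) (x, y))))\<^sup>2)"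
    for \<theta>
  have scale: "norm (c *\<^sub>R v) \<le> norm v" if "\<bar>c\<bar> \<le> 1" for c and v :: 'a
    using that by (simp add: mult_left_le_one_le)
  have "g \<theta> \<le> 2 * (norm x + norm y)" for \<theta>
  proof -
    have "norm (cos \<theta> *\<^sub>R x - sin \<theta> *\<^sub>R y) \<le> norm x + norm y"
      using norm_triangle_ineq4[of "cos \<theta> *\<^sub>R x" "sin \<theta> *\<^sub>R y"]
        scale[of "cos \<theta>" x] scale[of "sin \<theta>" y]
      by simp
    moreover have "norm (sin \<theta> *\<^sub>R x + cos \<theta> *\<^sub>R y) \<le> norm x + norm y"
      using norm_triangle_ineq[of "sin \<theta> *\<^sub>R x" "cos \<theta> *\<^sub>R y"]
        scale[of "sin \<theta>" x] scale[of "cos \<theta>" y]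
      by simp
    moreover have "g \<theta> \<le> norm (cos \<theta> *\<^sub>R x - sin \<theta> *\<^sub>R y) + norm (sin \<theta> *\<^sub>R x + cos \<theta> *\<^sub>R y)"
      using sqrt_sum_squares_le_sum[OF norm_ge_zero norm_ge_zero] by (simp add: g_def cmult_def)
    ultimately show ?thesis by argo
  qed
  then have "bdd_above (range g)" by (intro bdd_aboveI) auto
  then have "g 0 \<le> cnorm (x, y)" unfolding cnorm_def g_def[abs_def] by (rule cSUP_upper[OF UNIV_I])
  moreover have "g 0 = sqrt ((norm x)\<^sup>2 + (norm y)\<^sup>2)" by (simp add: g_def cmult_def)
  ultimately show "norm x \<le> cnorm (x, y)" "norm y \<le> cnorm (x, y)"
    using real_sqrt_sum_squares_ge1[of "norm x" "norm y"]
      real_sqrt_sum_squares_ge2[of "norm y" "norm x"]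
    by linarith+
qed

lemma cext_in_dual_coneC:
  assumes "cone_setting V S e m \<kappa>"
  shows "cext m \<in> dual_coneC S"
proof -
  have m: "bounded_linear m" and m_ge: "\<And>h. h \<in> coneR S \<Longrightarrow> \<kappa> * norm h \<le> m h" and "0 < \<kappa>"
    using assms by (auto simp: cone_setting_def S_star_def)
  have lin: "linear m" using m by (rule bounded_linear.linear)
  obtain K where "0 < K" and K: "\<And>x. norm (m x) \<le> norm x * K"
    using bounded_linear.pos_bounded[OF m] by blast
  have "cmod (cext m (x, y)) \<le> (2 * K) * cnorm (x, y)" for x y
  proof -
    have "cmod (cext m (x, y)) \<le> \<bar>m x\<bar> + \<bar>m y\<bar>"
      using cmod_le[of "cext m (x, y)"] by (simp add: cext_def)
    also have "\<dots> \<le> norm x * K + norm y * K" using K[of x] K[of y] by simp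
    also have "\<dots> \<le> cnorm (x, y) * K + cnorm (x, y) * K"
      using norm_le_cnorm[where x = x and y = y] \<open>0 < K\<close> by (intro add_mono mult_right_mono) auto
    finally show ?thesis by simp
  qed
  then have "cbounded_functional (cext m)"
    unfolding cbounded_functional_def by (auto simp: cext_simps[OF lin])
  moreover have "cext m h \<noteq> 0" if "h \<in> coneC S" for h
  proof -
    obtain z x y where h: "h = cmult z (x, y)" "z \<noteq> 0" "x \<in> coneR S"
      using \<open>h \<in> coneC S\<close> unfolding coneC_def by blast
    have "0 < \<kappa> * norm x" using \<open>0 < \<kappa>\<close> h(3) by (simp add: coneR_def)
    then have "m x \<noteq> 0" using m_ge[OF h(3)] by linarith
    then show ?thesis
      using h by (simp add: cext_simps(3)[OF lin]) (simp add: cext_def complex_eq_iff)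
  qed
  ultimately show ?thesis by (simp add: dual_coneC_def)
qed

lemma delta_C_le:
  assumes "E_set S h g \<noteq> {}" "0 < lo"
    and bounds: "\<And>z. z \<in> E_set S h g \<Longrightarrow> lo \<le> cmod z \<and> cmod z \<le> up"
  shows "delta_C S h g \<le> ereal (ln (up / lo))"
proof -
  let ?M = "(\<lambda>z. ereal (cmod z)) ` E_set S h g"
  have "Sup ?M \<le> ereal up" "ereal lo \<le> Inf ?M" using bounds by (auto intro!: Sup_least Inf_greatest)
  moreover have "Inf ?M \<le> Sup ?M" using assms(1) by (simp add: Inf_le_Sup)
  ultimately obtain s i where si: "Sup ?M = ereal s" "Inf ?M = ereal i" "lo \<le> i" "i \<le> s" "s \<le> up"
    by (cases "Sup ?M"; cases "Inf ?M") auto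
  then have "delta_C S h g = ereal (ln (s / i))"
    using assms(1,2) by (simp add: delta_C_def Let_def)
  moreover have "s / i \<le> up / lo" using si \<open>0 < lo\<close> by (intro frac_le) auto
  then have "ln (s / i) \<le> ln (up / lo)" using si \<open>0 < lo\<close> by simp
  ultimately show ?thesis by simp
qed

lemma diam_C_le_of_comparable:
  assumes f0: "f0 \<in> dual_coneC S" and nonzero: "\<And>f. f \<in> dual_coneC S \<Longrightarrow> f r \<noteq> 0"
    and comparable: "\<And>u. u \<in> A \<Longrightarrow> dual_comparable S R r u"
  shows "diam_C S A \<le> ereal (2 * ln R)"
  unfolding diam_C_def
proof (rule Sup_least)
  fix t assume "t \<in> {delta_C S h g | h g. h \<in> A \<and> g \<in> A}"
  then obtain h g where t: "t = delta_C S h g" and "h \<in> A" "g \<in> A" by blast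
  obtain p where "0 < p"
    and p: "\<And>f. f \<in> dual_coneC S \<Longrightarrow> p * cmod (f r) \<le> cmod (f h) \<and> cmod (f h) \<le> R * p * cmod (f r)"
    using comparable[OF \<open>h \<in> A\<close>] unfolding dual_comparable_def by blast
  obtain q where "0 < q"
    and q: "\<And>f. f \<in> dual_coneC S \<Longrightarrow> q * cmod (f r) \<le> cmod (f g) \<and> cmod (f g) \<le> R * q * cmod (f r)"
    using comparable[OF \<open>g \<in> A\<close>] unfolding dual_comparable_def by blast
  have "0 < p * cmod (f0 r)" using nonzero[OF f0] \<open>0 < p\<close> by simp
  moreover have "p * cmod (f0 r) \<le> R * (p * cmod (f0 r))" using p[OF f0] by (simp add: mult.assoc)
  ultimately have "1 \<le> R" by (simp add: mult_le_cancel_right1 mult.commute)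
  have "E_set S h g \<noteq> {}" using f0 by (auto simp: E_set_def)
  moreover have "p / (R * q) \<le> cmod z \<and> cmod z \<le> R * p / q" if z: "z \<in> E_set S h g" for z
  proof -
    obtain f where f: "f \<in> dual_coneC S" "z = f h / f g" using z unfolding E_set_def by blast
    define \<tau> where "\<tau> = cmod (f r)"
    have "0 < \<tau>" using nonzero[OF f(1)] by (simp add: \<tau>_def)
    then have "0 < q * \<tau>" using \<open>0 < q\<close> by simp
    have "(p * \<tau>) / (R * q * \<tau>) \<le> cmod (f h) / cmod (f g)"
      using p[OF f(1)] q[OF f(1)] \<open>0 < p\<close> \<open>0 < q * \<tau>\<close> \<open>0 < \<tau>\<close>
      by (intro frac_le) (auto simp: \<tau>_def)
    moreover have "0 \<le> R * p * \<tau>"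
      unfolding \<tau>_def using order_trans[OF norm_ge_zero conjunct2[OF p[OF f(1)]]] .
    then have "cmod (f h) / cmod (f g) \<le> (R * p * \<tau>) / (q * \<tau>)"
      using p[OF f(1)] q[OF f(1)] \<open>0 < q * \<tau>\<close> by (intro frac_le) (auto simp: \<tau>_def)
    ultimately show ?thesis using \<open>0 < \<tau>\<close> by (simp add: f norm_divide)
  qed
  ultimately have "delta_C S h g \<le> ereal (ln ((R * p / q) / (p / (R * q))))"
    using \<open>0 < p\<close> \<open>0 < q\<close> \<open>1 \<le> R\<close> by (intro delta_C_le) auto
  also have "(R * p / q) / (p / (R * q)) = R * R" using \<open>0 < p\<close> \<open>0 < q\<close> by simp
  also have "ln (R * R) = 2 * ln R" using \<open>1 \<le> R\<close> by (simp add: ln_mult)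
  finally show "t \<le> ereal (2 * ln R)" using t by simp
qed

lemma sixteen_eps_exp_le_one:
  assumes "0 \<le> \<Delta>" "0 < \<kappa>" "\<kappa> < 1" "0 < \<epsilon>"
    and "\<epsilon> < \<kappa>\<^sup>2 / (12 * sqrt 2) * exp (- 2 * \<Delta>)"
  shows "16 * \<epsilon> * exp \<Delta> \<le> 1"
proof -
  have "\<epsilon> * exp (2 * \<Delta>) < (\<kappa>\<^sup>2 / (12 * sqrt 2) * exp (- 2 * \<Delta>)) * exp (2 * \<Delta>)"
    using assms(5) by (rule mult_strict_right_mono) simp
  moreover have "16 * \<epsilon> * exp \<Delta> \<le> 16 * \<epsilon> * exp (2 * \<Delta>)" using assms by simp
  ultimately have "16 * \<epsilon> * exp \<Delta> < 16 * (\<kappa>\<^sup>2 / (12 * sqrt 2) * exp (- 2 * \<Delta>)) * exp (2 * \<Delta>)"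
    by simp
  also have "\<dots> = \<kappa>\<^sup>2 * (16 / (12 * sqrt 2))" by (simp add: exp_minus field_simps)
  also have "\<dots> \<le> 1 * 1"
  proof (rule mult_mono)
    show "\<kappa>\<^sup>2 \<le> 1" using assms power_le_one[of \<kappa> 2] by simp
    have "(4 / 3)\<^sup>2 \<le> (2::real)" by (simp add: power2_eq_square)
    then have "4 / 3 \<le> sqrt 2" by (rule real_le_rsqrt)
    then show "16 / (12 * sqrt 2) \<le> 1" by (simp add: field_simps)
  qed auto
  finally show ?thesis by simp
qed

lemma ln_four_exp_sq_le:
  assumes "0 \<le> \<Delta>" "0 < \<kappa>" "\<kappa> < 1"
  shows "2 * ln (4 * (exp \<Delta>)\<^sup>2)
           \<le> 8 * \<Delta> + 2 * ln (3 * sqrt 2 * \<kappa> powr (-2)) + sqrt 2 / 3 * \<kappa>\<^sup>2 * exp (- 2 * \<Delta>)"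
proof -
  have "2 * ln (4 * (exp \<Delta>)\<^sup>2) = 2 * ln 4 + 4 * \<Delta>"
    by (simp add: ln_mult power2_eq_square flip: exp_add)
  moreover have "ln 4 \<le> ln (3 * sqrt 2 * \<kappa> powr (-2))"
  proof -
    have "(4 / 3)\<^sup>2 \<le> (2::real)" by (simp add: power2_eq_square)
    then have "4 \<le> 3 * sqrt 2" using real_le_rsqrt by fastforce
    moreover have "1 \<le> \<kappa> powr (-2)"
      using assms power_le_one[of \<kappa> 2] by (simp add: powr_minus_divide powr_le1)
    ultimately have "4 * 1 \<le> 3 * sqrt 2 * \<kappa> powr (-2)" by (intro mult_mono) auto
    then show ?thesis by simp
  qed
  moreover have "0 \<le> sqrt 2 / 3 * \<kappa>\<^sup>2 * exp (- 2 * \<Delta>)" by simp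
  ultimately show ?thesis using assms by linarith
qed

theorem theorem5p17:
  fixes V1 :: "'a::banach set" and S1 :: "('a \<Rightarrow> real) set" and e1 :: 'a and m1 :: "'a \<Rightarrow> real"
    and V2 :: "'b::banach set" and S2 :: "('b \<Rightarrow> real) set" and e2 :: 'b and m2 :: "'b \<Rightarrow> real"
    and \<kappa> :: real and L :: "'a \<Rightarrow> 'b" and LC :: "'a \<times> 'a \<Rightarrow> 'b \<times> 'b" and \<epsilon> :: real
  assumes set1: "cone_setting V1 S1 e1 m1 \<kappa>"
    and set2: "cone_setting V2 S2 e2 m2 \<kappa>"
    and L_lin: "bounded_linear L"
    and LC_lin: "cbounded_linear LC"
    and L_cone: "L ` coneR S1 \<subseteq> coneR S2"
    and Delta_fin: "diam_H S2 (L ` coneR S1) < \<infinity>"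
    and eps_pos: "0 < \<epsilon>"
    and eps_small: "\<epsilon> < \<kappa>\<^sup>2 / (12 * sqrt 2) * exp (- 2 * real_of_ereal (diam_H S2 (L ` coneR S1)))"
    and close: "\<forall>l\<in>S2. \<forall>h\<in>coneR S1.
                 cmod (cext l (LC (h, 0)) - complex_of_real (l (L h))) \<le> \<epsilon> * l (L h)"
  shows "LC ` coneC S1 \<subseteq> coneC S2 \<and>
         diam_C S2 (LC ` coneC S1)
           \<le> ereal (8 * real_of_ereal (diam_H S2 (L ` coneR S1))
                     + 2 * ln (3 * sqrt 2 * \<kappa> powr (-2))
                     + sqrt 2 / 3 * \<kappa>\<^sup>2 * exp (- 2 * real_of_ereal (diam_H S2 (L ` coneR S1))))"
proof -
  \<comment> \<open>only the values of \<open>L\<close> on the cone enter, so \<open>L_lin\<close> is not needed\<close>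
  interpret pointed_cone S2 using set2 by (rule cone_setting_imp_pointed_cone)
  define \<Delta> where "\<Delta> = real_of_ereal (diam_H S2 (L ` coneR S1))"
  have e1: "e1 \<in> coneR S1" and \<kappa>: "0 < \<kappa>" "\<kappa> < 1" using set1 by (auto simp: cone_setting_def)
  have a0: "L e1 \<in> coneR S2" using L_cone e1 by blast
  have bounds: "\<exists>lo hi. cone_bounds S2 (L x) lo hi (L y) \<and> hi \<le> exp \<Delta> * lo"
    if "x \<in> coneR S1" "y \<in> coneR S1" for x y
    using cone_bounds_of_diam_H[OF L_cone Delta_fin] that unfolding \<Delta>_def by blast
  then obtain lo hi where "cone_bounds S2 (L e1) lo hi (L e1)" "hi \<le> exp \<Delta> * lo" using e1 by blast
  then have "0 \<le> \<Delta>" using ratio_bound_ge_one[of lo hi "exp \<Delta>"] by (simp add: cone_bounds_def)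
  have eps: "16 * \<epsilon> * exp \<Delta> \<le> 1"
    using sixteen_eps_exp_le_one[OF \<open>0 \<le> \<Delta>\<close> \<kappa> eps_pos] eps_small by (simp add: \<Delta>_def)
  have close': "close_to S2 \<epsilon> (L h) (LC (h, 0))" if "h \<in> coneR S1" for h
    using close that by (simp add: close_to_def)
  have image: "u \<in> coneC S2 \<and> dual_comparable S2 (4 * (exp \<Delta>)\<^sup>2) (L e1, 0) u"
    if "u \<in> LC ` coneC S1" for u
    using image_in_coneC_comparable[OF LC_lin e1 a0 bounds close' _ eps that] eps_pos by simp
  have "f (L e1, 0) \<noteq> 0" if "f \<in> dual_coneC S2" for f
    using dual_coneC_nonzero[OF that coneR_imp_coneC[OF a0]] .
  then have "diam_C S2 (LC ` coneC S1) \<le> ereal (2 * ln (4 * (exp \<Delta>)\<^sup>2))"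
    using diam_C_le_of_comparable[OF cext_in_dual_coneC[OF set2]] image by blast
  then show ?thesis
    using image ln_four_exp_sq_le[OF \<open>0 \<le> \<Delta>\<close> \<kappa>] unfolding \<Delta>_def by (auto intro: order_trans)
qed

end
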